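(* Let $V_1,V_2,V_3,Y,Z\in\mathbb{R}^3$ with $\|Y\|=\|Z\|$ and $Y,Z\in\operatorname{span}^+(V_1,V_2,V_3)$. Then at least one of the inequalities $\langle V_1,Y\rangle>\langle V_1,Z\rangle$, $\langle V_2,Y\rangle>\langle V_2,Z\rangle$, $\langle V_3,Y\rangle>\langle V_3,Z\rangle$ fails.
   Context: $\operatorname{span}^+(V_1,V_2,V_3)=\{\lambda_1V_1+\lambda_2V_2+\lambda_3V_3:\lambda_1,\lambda_2,\lambda_3>0\}$. *)

theory Defs
  imports "HOL-Analysis.Analysis"
begin

definition span_pos :: "real^3 \<Rightarrow> real^3 \<Rightarrow> real^3 \<Rightarrow> (real^3) set" where
  "span_pos V1 V2 V3 =
     {l1 *\<^sub>R V1 + l2 *\<^sub>R V2 + l3 *\<^sub>R V3 | l1 l2 l3. l1 > 0 \<and> l2 > 0 \<and> l3 > 0}"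

end

theory Submission
  imports Defs
begin

text \<open>If all three inequalities held, \<open>D = Y - Z\<close> would have positive inner product with
  \<open>V\<^sub>1, V\<^sub>2, V\<^sub>3\<close>, hence with every vector of the open cone they span, in particular
  with \<open>Y + Z\<close>. But \<open>(Y + Z) \<bullet> (Y - Z) = \<parallel>Y\<parallel>\<^sup>2 - \<parallel>Z\<parallel>\<^sup>2 = 0\<close>.\<close>

lemma span_pos_add:
  assumes "Y \<in> span_pos V1 V2 V3" and "Z \<in> span_pos V1 V2 V3"
  shows "Y + Z \<in> span_pos V1 V2 V3"
proof -
  obtain a1 a2 a3 where Y: "Y = a1 *\<^sub>R V1 + a2 *\<^sub>R V2 + a3 *\<^sub>R V3" "a1 > 0" "a2 > 0" "a3 > 0"
    using assms(1) unfolding span_pos_def by blast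
  obtain b1 b2 b3 where Z: "Z = b1 *\<^sub>R V1 + b2 *\<^sub>R V2 + b3 *\<^sub>R V3" "b1 > 0" "b2 > 0" "b3 > 0"
    using assms(2) unfolding span_pos_def by blast
  have "Y + Z = (a1 + b1) *\<^sub>R V1 + (a2 + b2) *\<^sub>R V2 + (a3 + b3) *\<^sub>R V3"
    unfolding Y(1) Z(1) by (simp add: algebra_simps)
  with Y Z show ?thesis
    unfolding span_pos_def by (blast intro: add_pos_pos)
qed

lemma inner_span_pos_pos:
  assumes "Y \<in> span_pos V1 V2 V3"
    and "V1 \<bullet> D > 0" "V2 \<bullet> D > 0" "V3 \<bullet> D > 0"
  shows "Y \<bullet> D > 0"
proof -
  obtain l1 l2 l3 where Y: "Y = l1 *\<^sub>R V1 + l2 *\<^sub>R V2 + l3 *\<^sub>R V3"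
    and l: "l1 > 0" "l2 > 0" "l3 > 0"
    using assms(1) unfolding span_pos_def by blast
  have "Y \<bullet> D = l1 * (V1 \<bullet> D) + l2 * (V2 \<bullet> D) + l3 * (V3 \<bullet> D)"
    unfolding Y by (simp add: inner_add_left)
  also have "\<dots> > 0"
    using l assms(2-4) by (intro add_pos_pos mult_pos_pos)
  finally show ?thesis .
qed

lemma inner_add_diff_eq_norm_power2_diff:
  fixes x y :: "'a::real_inner"
  shows "(x + y) \<bullet> (x - y) = (norm x)\<^sup>2 - (norm y)\<^sup>2"
  by (simp add: inner_add_left inner_diff_right inner_commute[of y x] power2_norm_eq_inner)

theorem lemma5p3:
  fixes V1 V2 V3 Y Z :: "real^3"
  assumes "norm Y = norm Z"
    and "Y \<in> span_pos V1 V2 V3"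
    and "Z \<in> span_pos V1 V2 V3"
  shows "\<not> (V1 \<bullet> Y > V1 \<bullet> Z \<and> V2 \<bullet> Y > V2 \<bullet> Z \<and> V3 \<bullet> Y > V3 \<bullet> Z)"
proof
  assume "V1 \<bullet> Y > V1 \<bullet> Z \<and> V2 \<bullet> Y > V2 \<bullet> Z \<and> V3 \<bullet> Y > V3 \<bullet> Z"
  then have "V1 \<bullet> (Y - Z) > 0" "V2 \<bullet> (Y - Z) > 0" "V3 \<bullet> (Y - Z) > 0"
    by (auto simp: inner_diff_right)
  with span_pos_add[OF assms(2,3)] have "(Y + Z) \<bullet> (Y - Z) > 0"
    by (rule inner_span_pos_pos)
  with assms(1) show False
    by (simp add: inner_add_diff_eq_norm_power2_diff)
qed

end
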